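(* Let $n\geq m\geq 1$ and let $\mathcal{C},\mathcal{D}\subseteq\binom{[n]}{m}$ be collections of $m$-subsets of $[n]=\{1,\dots,n\}$ such that the strata $\mathcal{S}^{tnz}_{\mathcal{C}}(\mathbb{R})$ and $\mathcal{S}^{tnz}_{\mathcal{D}}(\mathbb{R})$ are non-empty. Then $\mathcal{S}^{tnz}_{\mathcal{C}}(\mathbb{R})$ and $\mathcal{S}^{tnz}_{\mathcal{D}}(\mathbb{R})$ lie in the same orbit of the action of $S_n$ on $\mathcal{S}^{tnz}_{mn}(\mathbb{R})$ if and only if for any two matrices $M=(v_1,\dots,v_n),N=(w_1,\dots,w_n)\in Mat^{tnz}_{mn}(\mathbb{R})$ with $GL_m(\mathbb{R})M\in\mathcal{S}^{tnz}_{\mathcal{C}}(\mathbb{R})$ and $GL_m(\mathbb{R})N\in\mathcal{S}^{tnz}_{\mathcal{D}}(\mathbb{R})$, the sets $S=\{v_1,\dots,v_n\}$ and $T=\{w_1,\dots,w_n\}$ are isomorphic generic point arrangements.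
   Context: A point arrangement $S=\{v_1,\dots,v_n\}\subset\mathbb{R}^m$ is generic if every subset of $S$ of cardinality at most $m$ is linearly independent. Two generic point arrangements $S_1,S_2\subset\mathbb{R}^m$ are isomorphic if there is a bijection $\sigma:S_1\to S_2$ such that for every $(m+1)$-subset $\{v_{i_1},\dots,v_{i_{m+1}}\}\subseteq S_1$, writing $v_{i_{m+1}}=\sum_{j=1}^m a_jv_{i_j}$ and $\sigma(v_{i_{m+1}})=\sum_{j=1}^m b_j\sigma(v_{i_j})$, one has $a_jb_j>0$ for all $1\le j\le m$. $Mat^{tnz}_{mn}(\mathbb{R})$ is the set of real $m\times n$ matrices all of whose maximal ($m\times m$) minors $\Delta_I(M)=\det(M_I)$, $I\in\binom{[n]}{m}$ ($M_I$ the submatrix on columns $I$), are nonzero; $Gr^{tnz}_{mn}(\mathbb{R})=GL_m(\mathbb{R})\backslash Mat^{tnz}_{mn}(\mathbb{R})$ (left multiplication). For $\mathcal{C}\subseteq\binom{[n]}{m}$ the stratum $\mathcal{S}^{tnz}_{\mathcal{C}}(\mathbb{R})$ is the set of $GL_m(\mathbb{R})M\in Gr^{tnz}_{mn}(\mathbb{R})$ such that either $\Delta_I(M)>0$ for all $I\in\mathcal{C}$ and $\Delta_I(M)<0$ for all $I\notin\mathcal{C}$, or $\Delta_I(M)<0$ for all $I\in\mathcal{C}$ and $\Delta_I(M)>0$ for all $I\notin\mathcal{C}$ (so $\mathcal{S}^{tnz}_{\mathcal{C}}=\mathcal{S}^{tnz}_{\binom{[n]}{m}\setminus\mathcal{C}}$).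 $\mathcal{S}^{tnz}_{mn}(\mathbb{R})$ denotes the set of non-empty strata. The symmetric group $S_n$ acts on $Gr^{tnz}_{mn}(\mathbb{R})$ by $\sigma\bullet GL_m(\mathbb{R})(v_1,\dots,v_n)=GL_m(\mathbb{R})(v_{\sigma^{-1}(1)},\dots,v_{\sigma^{-1}(n)})$, which induces an action on $\mathcal{S}^{tnz}_{mn}(\mathbb{R})$: $\sigma\bullet\mathcal{S}^{tnz}_{\mathcal{C}}(\mathbb{R})$ is the stratum containing $\sigma\bullet GL_m(\mathbb{R})M$ for any $GL_m(\mathbb{R})M\in\mathcal{S}^{tnz}_{\mathcal{C}}(\mathbb{R})$. *)

theory Defs
  imports "Jordan_Normal_Form.DL_Submatrix" "Jordan_Normal_Form.Determinant"
          "HOL-Combinatorics.Permutations"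
begin

text \<open>Conventions: [n] is rendered as the index set {0..<n} (0-based); an m x n real
 matrix is a JNF matrix in carrier_mat m n; its j-th column is col A j.\<close>

definition msubsets :: "nat \<Rightarrow> nat \<Rightarrow> nat set set" where
  "msubsets n m = {I. I \<subseteq> {0..<n} \<and> card I = m}"

definition maxminor :: "real mat \<Rightarrow> nat set \<Rightarrow> real" where
  "maxminor A I = det (submatrix A UNIV I)"

definition tnz :: "nat \<Rightarrow> nat \<Rightarrow> real mat \<Rightarrow> bool" where
  "tnz m n A \<longleftrightarrow> A \<in> carrier_mat m n \<and> (\<forall>I\<in>msubsets n m. maxminor A I \<noteq> 0)"

text \<open>The stratum S_C, viewed as the (GL_m-invariant) set of matrices whose row space lies in it.\<close>
definition stratum :: "nat \<Rightarrow> nat \<Rightarrow> nat set set \<Rightarrow> real mat set" where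
  "stratum m n C = {A. tnz m n A \<and>
     ((\<forall>I\<in>msubsets n m. (I \<in> C \<longrightarrow> maxminor A I > 0) \<and> (I \<notin> C \<longrightarrow> maxminor A I < 0)) \<or>
      (\<forall>I\<in>msubsets n m. (I \<in> C \<longrightarrow> maxminor A I < 0) \<and> (I \<notin> C \<longrightarrow> maxminor A I > 0)))}"

definition perm_act :: "(nat \<Rightarrow> nat) \<Rightarrow> real mat \<Rightarrow> real mat" where
  "perm_act \<sigma> A = mat (dim_row A) (dim_col A) (\<lambda>(i,j). A $$ (i, inv_into UNIV \<sigma> j))"

definition same_orbit :: "nat \<Rightarrow> nat \<Rightarrow> nat set set \<Rightarrow> nat set set \<Rightarrow> bool" where
  "same_orbit m n C D \<longleftrightarrow>
     (\<exists>\<sigma>. \<sigma> permutes {0..<n} \<and> (\<forall>A\<in>stratum m n C. perm_act \<sigma> A \<in> stratum m n D))"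

text \<open>Point arrangements as families v_0,...,v_{n-1} of vectors in R^m.\<close>
definition lin_indep_fam :: "nat \<Rightarrow> (nat \<Rightarrow> real vec) \<Rightarrow> nat set \<Rightarrow> bool" where
  "lin_indep_fam m v J \<longleftrightarrow>
     (\<forall>c. (\<forall>k<m. (\<Sum>j\<in>J. c j * v j $ k) = 0) \<longrightarrow> (\<forall>j\<in>J. c j = 0))"

definition generic_arr :: "nat \<Rightarrow> nat \<Rightarrow> (nat \<Rightarrow> real vec) \<Rightarrow> bool" where
  "generic_arr m n v \<longleftrightarrow> (\<forall>j<n. dim_vec (v j) = m) \<and>
     (\<forall>J. J \<subseteq> {0..<n} \<and> card J \<le> m \<longrightarrow> lin_indep_fam m v J)"

definition iso_arr :: "nat \<Rightarrow> nat \<Rightarrow> (nat \<Rightarrow> real vec) \<Rightarrow> (nat \<Rightarrow> real vec) \<Rightarrow> bool" where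
  "iso_arr m n v w \<longleftrightarrow> (\<exists>\<sigma>. bij_betw \<sigma> {0..<n} {0..<n} \<and>
     (\<forall>f. inj_on f {..m} \<and> f ` {..m} \<subseteq> {0..<n} \<longrightarrow>
       (\<forall>a b. (\<forall>k<m. v (f m) $ k = (\<Sum>j<m. a j * v (f j) $ k)) \<and>
              (\<forall>k<m. w (\<sigma> (f m)) $ k = (\<Sum>j<m. b j * w (\<sigma> (f j)) $ k))
              \<longrightarrow> (\<forall>j<m. a j * b j > 0))))"

definition iso_generic_arr :: "nat \<Rightarrow> nat \<Rightarrow> (nat \<Rightarrow> real vec) \<Rightarrow> (nat \<Rightarrow> real vec) \<Rightarrow> bool" where
  "iso_generic_arr m n v w \<longleftrightarrow> generic_arr m n v \<and> generic_arr m n w \<and> iso_arr m n v w"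

end

theory Submission
  imports Defs
begin

text \<open>
  By Cramer's rule, the j-th coefficient of v_(i_(m+1)) in the basis v_(i_1), ..., v_(i_m) is
  the quotient of the maximal minor on the columns i_1, ..., i_m with i_j replaced by i_(m+1)
  and the minor on i_1, ..., i_m. Hence a permutation sigma is an isomorphism from the columns
  of M to those of N exactly when the products Delta_I(sigma M) Delta_I(N) have the same sign
  for any two m-subsets I that differ by one exchange. Since any two m-subsets are connected by
  a chain of exchanges, this means that these products have constant sign, i.e. that sigma M
  and N lie in the same stratum; and the stratum of sigma M depends only on that of M.
\<close>

subsection \<open>Column selections and maximal minors\<close>

lemma bij_betw_pick:
  assumes "finite I"
  shows "bij_betw (pick I) {..<card I} I"
proof -
  have "inj_on (pick I) {..<card I}"
  proof (rule inj_onI)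
    fix x y assume "x \<in> {..<card I}" "y \<in> {..<card I}" "pick I x = pick I y"
    thus "x = y" using pick_mono[of y I x] pick_mono[of x I y] by (cases x y rule: linorder_cases) auto
  qed
  moreover have "I \<subseteq> pick I ` {..<card I}"
  proof
    fix i assume i: "i \<in> I"
    have "{a\<in>I. a < i} \<subset> I" using i by auto
    hence "card {a\<in>I. a < i} < card I" using assms by (intro psubset_card_mono) auto
    thus "i \<in> pick I ` {..<card I}" using pick_card_in_set[OF i, symmetric] by blast
  qed
  ultimately show ?thesis using pick_in_set by (auto simp: bij_betw_def)
qed

lemma finite_bij_betw_lessThan_from:
  assumes "finite I" "p \<in> I"
  obtains g where "bij_betw g {..<card I} I" "g 0 = p"
proof -
  obtain h where h: "bij_betw h {..<card I} I"
    using ex_bij_betw_nat_finite[OF assms(1)] by (auto simp: lessThan_atLeast0)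
  define t where "t = inv_into {..<card I} h p"
  have t: "t < card I" "h t = p"
    using bij_betw_inv_into_left bij_betwE bij_betw_inv_into[OF h] assms(2) h
    by (fastforce simp: t_def bij_betw_inv_into_right[OF h])+
  have "transpose 0 t permutes {..<card I}"
    using t by (intro permutes_swap_id) auto
  hence "bij_betw (h \<circ> transpose 0 t) {..<card I} I"
    using h by (intro bij_betw_trans) (auto dest: permutes_imp_bij)
  moreover have "(h \<circ> transpose 0 t) 0 = p" using t by simp
  ultimately show thesis by (rule that)
qed

definition cols_mat :: "nat \<Rightarrow> real mat \<Rightarrow> (nat \<Rightarrow> nat) \<Rightarrow> real mat" where
  "cols_mat m A g = mat m m (\<lambda>(i, j). A $$ (i, g j))"

lemma cols_mat_carrier [simp]: "cols_mat m A g \<in> carrier_mat m m"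
  by (simp add: cols_mat_def)

lemma cols_mat_cong: "(\<And>j. j < m \<Longrightarrow> g j = h j) \<Longrightarrow> cols_mat m A g = cols_mat m A h"
  unfolding cols_mat_def by (intro eq_matI) auto

lemma maxminor_eq_det_cols_mat_pick:
  assumes A: "A \<in> carrier_mat m n" and I: "I \<in> msubsets n m"
  shows "maxminor A I = det (cols_mat m A (pick I))"
proof -
  have I': "I \<subseteq> {0..<n}" "card I = m" using I by (auto simp: msubsets_def)
  have r: "card {i. i < dim_row A \<and> i \<in> UNIV} = m" using A by simp
  have "{j. j < dim_col A \<and> j \<in> I} = I" using A I' by auto
  hence c: "card {j. j < dim_col A \<and> j \<in> I} = m" using I' by simp
  have "submatrix A UNIV I = cols_mat m A (pick I)"
  proof (rule eq_matI)
    fix i j assume "i < dim_row (cols_mat m A (pick I))" "j < dim_col (cols_mat m A (pick I))"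
    hence ij: "i < card {i. i < dim_row A \<and> i \<in> UNIV}" "j < card {j. j < dim_col A \<and> j \<in> I}"
      using r c by (auto simp: cols_mat_def)
    show "submatrix A UNIV I $$ (i, j) = cols_mat m A (pick I) $$ (i, j)"
      unfolding submatrix_index[OF ij] using ij r c by (simp add: cols_mat_def pick_UNIV)
  qed (use c r in \<open>auto simp: dim_submatrix cols_mat_def\<close>)
  thus ?thesis by (simp add: maxminor_def)
qed

lemma det_cols_mat_comp_permutes:
  assumes p: "p permutes {0..<m}"
  shows "det (cols_mat m A (g \<circ> p)) = signof p * det (cols_mat m A g)"
proof -
  have pl: "\<And>j. j < m \<Longrightarrow> p j < m" using permutes_in_image[OF p] by auto
  have eq: "cols_mat m A (g \<circ> p) =
      transpose_mat (mat m m (\<lambda>(i, j). transpose_mat (cols_mat m A g) $$ (p i, j)))"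
    by (rule eq_matI) (auto simp: cols_mat_def pl)
  have "det (cols_mat m A (g \<circ> p)) = det (mat m m (\<lambda>(i, j). transpose_mat (cols_mat m A g) $$ (p i, j)))"
    unfolding eq by (rule det_transpose) auto
  also have "\<dots> = signof p * det (transpose_mat (cols_mat m A g))"
    by (rule det_permute_rows[OF _ p]) auto
  also have "det (transpose_mat (cols_mat m A g)) = det (cols_mat m A g)"
    by (rule det_transpose[of _ m]) simp
  finally show ?thesis .
qed

lemma sorting_permutes_pick_image:
  assumes inj: "inj_on g {..<m}"
  obtains p where "p permutes {0..<m}" "\<And>j. j < m \<Longrightarrow> g j = pick (g ` {..<m}) (p j)"
proof -
  let ?I = "g ` {..<m}"
  define p where "p j = (if j < m then card {a\<in>?I. a < g j} else j)" for j
  have cI: "card ?I = m" using card_image[OF inj] by simp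
  have pk: "pick ?I (p j) = g j" if "j < m" for j
    using pick_card_in_set[of "g j" ?I] that by (simp add: p_def)
  have pl: "p j < m" if "j < m" for j
  proof -
    have "{a\<in>?I. a < g j} \<subset> ?I" using that by auto
    hence "card {a\<in>?I. a < g j} < card ?I" by (intro psubset_card_mono) auto
    thus ?thesis using cI that by (simp add: p_def)
  qed
  have "inj_on p {0..<m}"
  proof (rule inj_onI)
    fix x y assume "x \<in> {0..<m}" "y \<in> {0..<m}" "p x = p y"
    thus "x = y" using pk inj by (metis atLeastLessThan_iff inj_on_contraD lessThan_iff)
  qed
  moreover have "p ` {0..<m} = {0..<m}"
    by (rule endo_inj_surj) (use calculation pl in auto)
  ultimately have "p permutes {0..<m}"
    by (intro bij_imp_permutes) (auto simp: bij_betw_def p_def)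
  thus thesis using pk that by auto
qed

lemma image_lessThan_in_msubsets:
  "inj_on g {..<m} \<Longrightarrow> g ` {..<m} \<subseteq> {0..<n} \<Longrightarrow> g ` {..<m} \<in> msubsets n m"
  by (simp add: msubsets_def card_image)

text \<open>s is the sign of the permutation sorting g.\<close>
lemma det_cols_mat_eq_sign_maxminor:
  assumes inj: "inj_on g {..<m}" and rng: "g ` {..<m} \<subseteq> {0..<n}"
  obtains s :: real where "s * s = 1"
    "\<And>A. A \<in> carrier_mat m n \<Longrightarrow> det (cols_mat m A g) = s * maxminor A (g ` {..<m})"
proof -
  let ?I = "g ` {..<m}"
  obtain p where p: "p permutes {0..<m}" and pk: "\<And>j. j < m \<Longrightarrow> g j = pick ?I (p j)"
    using sorting_permutes_pick_image[OF inj] by blast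
  have I: "?I \<in> msubsets n m" by (rule image_lessThan_in_msubsets[OF inj rng])
  show thesis
  proof (rule that[of "signof p"])
    show "signof p * signof p = (1::real)" by (cases p rule: sign_cases) auto
    fix A :: "real mat" assume A: "A \<in> carrier_mat m n"
    have "cols_mat m A g = cols_mat m A (pick ?I \<circ> p)" by (rule cols_mat_cong) (use pk in auto)
    thus "det (cols_mat m A g) = signof p * maxminor A ?I"
      using det_cols_mat_comp_permutes[OF p] maxminor_eq_det_cols_mat_pick[OF A I] by simp
  qed
qed

lemma det_cols_mat_mult:
  assumes "inj_on g {..<m}" "g ` {..<m} \<subseteq> {0..<n}" "A \<in> carrier_mat m n" "B \<in> carrier_mat m n"
  shows "det (cols_mat m A g) * det (cols_mat m B g) = maxminor A (g ` {..<m}) * maxminor B (g ` {..<m})"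
proof -
  obtain s :: real where "s * s = 1"
    "\<And>A. A \<in> carrier_mat m n \<Longrightarrow> det (cols_mat m A g) = s * maxminor A (g ` {..<m})"
    using det_cols_mat_eq_sign_maxminor[OF assms(1,2)] by blast
  thus ?thesis using assms(3,4) by (simp add: algebra_simps)
qed

lemma det_cols_mat_nonzero:
  assumes "tnz m n A" "inj_on g {..<m}" "g ` {..<m} \<subseteq> {0..<n}"
  shows "det (cols_mat m A g) \<noteq> 0"
proof -
  obtain s :: real where "s * s = 1"
    "\<And>A. A \<in> carrier_mat m n \<Longrightarrow> det (cols_mat m A g) = s * maxminor A (g ` {..<m})"
    using det_cols_mat_eq_sign_maxminor[OF assms(2,3)] by blast
  thus ?thesis using assms image_lessThan_in_msubsets[OF assms(2,3)] by (auto simp: tnz_def)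
qed

subsection \<open>Cramer's rule\<close>

lemma cols_mat_mult_vec_nth:
  assumes "k < m" "x \<in> carrier_vec m"
  shows "(cols_mat m A g *\<^sub>v x) $ k = (\<Sum>i<m. x $ i * A $$ (k, g i))"
  using assms by (simp add: cols_mat_def scalar_prod_def lessThan_atLeast0 mult.commute)

lemma col_relation_iff_entries:
  assumes "A \<in> carrier_mat m n" "g ` {..m} \<subseteq> {0..<n}"
  shows "(\<forall>k<m. col A (g m) $ k = (\<Sum>i<m. a i * col A (g i) $ k)) \<longleftrightarrow>
         (\<forall>k<m. A $$ (k, g m) = (\<Sum>i<m. a i * A $$ (k, g i)))"
proof -
  have gl: "g i < n" if "i \<le> m" for i using assms(2) that by auto
  have "(\<Sum>i<m. a i * col A (g i) $ k) = (\<Sum>i<m. a i * A $$ (k, g i))" if "k < m" for k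
    using assms(1) gl that by (intro sum.cong) auto
  thus ?thesis using assms(1) gl by auto
qed

lemma det_cols_mat_fun_upd:
  assumes j: "j < m" and a: "\<forall>k<m. A $$ (k, g m) = (\<Sum>i<m. a i * A $$ (k, g i))"
  shows "det (cols_mat m A (g(j := g m))) = a j * det (cols_mat m A g)"
proof -
  let ?x = "vec m a"
  have "replace_col (cols_mat m A g) (cols_mat m A g *\<^sub>v ?x) j = cols_mat m A (g(j := g m))"
  proof (rule eq_matI)
    fix k i assume "k < dim_row (cols_mat m A (g(j := g m)))" "i < dim_col (cols_mat m A (g(j := g m)))"
    hence ki: "k < m" "i < m" by (auto simp: cols_mat_def)
    have "(cols_mat m A g *\<^sub>v ?x) $ k = A $$ (k, g m)"
      using cols_mat_mult_vec_nth[OF ki(1), of ?x] a ki by simp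
    thus "replace_col (cols_mat m A g) (cols_mat m A g *\<^sub>v ?x) j $$ (k, i) = cols_mat m A (g(j := g m)) $$ (k, i)"
      using ki by (simp add: replace_col_def cols_mat_def)
  qed (simp_all add: replace_col_def cols_mat_def)
  moreover have "det (replace_col (cols_mat m A g) (cols_mat m A g *\<^sub>v ?x) j) = ?x $ j * det (cols_mat m A g)"
    by (rule cramer_lemma_mat[OF cols_mat_carrier _ j]) simp
  ultimately show ?thesis using j by simp
qed

lemma cols_mat_coefficients_exist:
  assumes "det (cols_mat m A g) \<noteq> 0"
  obtains a where "\<forall>k<m. A $$ (k, g m) = (\<Sum>i<m. a i * A $$ (k, g i))"
proof -
  let ?M = "cols_mat m A g"
  have "?M \<in> Units (ring_mat TYPE(real) m undefined)"
    by (rule det_non_zero_imp_unit[OF cols_mat_carrier assms])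
  then obtain N where N: "N \<in> carrier_mat m m" "?M * N = 1\<^sub>m m"
    unfolding Units_def ring_mat_def by auto
  define b where "b = vec m (\<lambda>k. A $$ (k, g m))"
  define x where "x = N *\<^sub>v b"
  have b: "b \<in> carrier_vec m" and x: "x \<in> carrier_vec m" using N by (simp_all add: x_def b_def)
  have "?M *\<^sub>v x = (?M * N) *\<^sub>v b"
    unfolding x_def by (rule assoc_mult_mat_vec[symmetric, OF cols_mat_carrier N(1) b])
  hence "?M *\<^sub>v x = b" using N(2) b by simp
  have "A $$ (k, g m) = (\<Sum>i<m. x $ i * A $$ (k, g i))" if k: "k < m" for k
  proof -
    have "A $$ (k, g m) = (?M *\<^sub>v x) $ k" using \<open>?M *\<^sub>v x = b\<close> k by (simp add: b_def)
    also have "\<dots> = (\<Sum>i<m. x $ i * A $$ (k, g i))" by (rule cols_mat_mult_vec_nth[OF k x])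
    finally show ?thesis .
  qed
  thus thesis using that by blast
qed

lemma inj_on_fun_upd_last:
  fixes g :: "nat \<Rightarrow> 'a"
  assumes inj: "inj_on g {..m}" and j: "j < m"
  shows "inj_on (g(j := g m)) {..<m}"
proof (rule inj_onI)
  fix x y assume x: "x \<in> {..<m}" and y: "y \<in> {..<m}" and e: "(g(j := g m)) x = (g(j := g m)) y"
  define r where "r i = (if i = j then m else i)" for i
  have "g (r x) = g (r y)" using e by (simp add: r_def if_distrib)
  moreover have "r x \<in> {..m}" "r y \<in> {..m}" using x y by (simp_all add: r_def)
  ultimately have "r x = r y" using inj by (blast dest: inj_onD)
  thus "x = y" using x y j by (auto simp: r_def split: if_splits)
qed

lemma minor_products_exchange:
  assumes A: "A \<in> carrier_mat m n" and B: "B \<in> carrier_mat m n"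
    and g: "inj_on g {..m}" "g ` {..m} \<subseteq> {0..<n}" and j: "j < m"
    and a: "\<forall>k<m. col A (g m) $ k = (\<Sum>i<m. a i * col A (g i) $ k)"
    and b: "\<forall>k<m. col B (g m) $ k = (\<Sum>i<m. b i * col B (g i) $ k)"
  shows "maxminor A ((g(j := g m)) ` {..<m}) * maxminor B ((g(j := g m)) ` {..<m}) =
         a j * b j * (maxminor A (g ` {..<m}) * maxminor B (g ` {..<m}))"
proof -
  let ?h = "g(j := g m)"
  have gl: "\<And>i. i \<le> m \<Longrightarrow> g i < n" using g(2) by auto
  have h_inj: "inj_on ?h {..<m}" by (rule inj_on_fun_upd_last[OF g(1) j])
  have h_rng: "?h ` {..<m} \<subseteq> {0..<n}" using gl by auto
  have g_inj: "inj_on g {..<m}" by (rule inj_on_subset[OF g(1)]) auto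
  have g_rng: "g ` {..<m} \<subseteq> {0..<n}" using gl by auto
  have dA: "det (cols_mat m A ?h) = a j * det (cols_mat m A g)"
    by (rule det_cols_mat_fun_upd[OF j col_relation_iff_entries[OF A g(2), THEN iffD1, OF a]])
  have dB: "det (cols_mat m B ?h) = b j * det (cols_mat m B g)"
    by (rule det_cols_mat_fun_upd[OF j col_relation_iff_entries[OF B g(2), THEN iffD1, OF b]])
  have "maxminor A (?h ` {..<m}) * maxminor B (?h ` {..<m}) = det (cols_mat m A ?h) * det (cols_mat m B ?h)"
    by (rule det_cols_mat_mult[OF h_inj h_rng A B, symmetric])
  also have "\<dots> = a j * b j * (det (cols_mat m A g) * det (cols_mat m B g))"
    by (simp add: dA dB)
  also have "\<dots> = a j * b j * (maxminor A (g ` {..<m}) * maxminor B (g ` {..<m}))"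
    by (simp add: det_cols_mat_mult[OF g_inj g_rng A B])
  finally show ?thesis .
qed

lemma col_coefficients_exist:
  assumes "tnz m n A" "inj_on g {..<m}" "g ` {..m} \<subseteq> {0..<n}"
  obtains a where "\<forall>k<m. col A (g m) $ k = (\<Sum>i<m. a i * col A (g i) $ k)"
proof -
  have A: "A \<in> carrier_mat m n" using assms(1) by (simp add: tnz_def)
  have "g ` {..<m} \<subseteq> {0..<n}" using assms(3) by auto
  then obtain a where "\<forall>k<m. A $$ (k, g m) = (\<Sum>i<m. a i * A $$ (k, g i))"
    using cols_mat_coefficients_exist det_cols_mat_nonzero[OF assms(1,2)] by blast
  thus thesis by (intro that col_relation_iff_entries[OF A assms(3), THEN iffD2])
qed

subsection \<open>Generic arrangements\<close>

lemma lin_indep_fam_subset: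
  assumes "lin_indep_fam m v I" "J \<subseteq> I" "finite I"
  shows "lin_indep_fam m v J"
  unfolding lin_indep_fam_def
proof (intro allI impI ballI)
  fix c :: "nat \<Rightarrow> real" and j
  assume c: "\<forall>k<m. (\<Sum>j\<in>J. c j * v j $ k) = 0" and j: "j \<in> J"
  define c' where "c' i = (if i \<in> J then c i else 0)" for i
  have "(\<Sum>i\<in>I. c' i * v i $ k) = (\<Sum>i\<in>J. c i * v i $ k)" for k
    using assms(2,3) by (intro sum.mono_neutral_cong_right) (auto simp: c'_def)
  hence "\<forall>k<m. (\<Sum>i\<in>I. c' i * v i $ k) = 0" using c by simp
  hence "c' j = 0" using assms(1,2) j unfolding lin_indep_fam_def by blast
  thus "c j = 0" using j by (simp add: c'_def)
qed

lemma lin_indep_fam_cols_if_maxminor_nonzero: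
  assumes A: "A \<in> carrier_mat m n" and I: "I \<in> msubsets n m" and nz: "maxminor A I \<noteq> 0"
  shows "lin_indep_fam m (col A) I"
  unfolding lin_indep_fam_def
proof (intro allI impI ballI)
  fix c :: "nat \<Rightarrow> real" and i
  assume c: "\<forall>k<m. (\<Sum>j\<in>I. c j * col A j $ k) = 0" and i: "i \<in> I"
  have IS: "I \<subseteq> {0..<n}" and cI: "card I = m" using I by (auto simp: msubsets_def)
  have fI: "finite I" using IS finite_subset by blast
  define x where "x = vec m (\<lambda>t. c (pick I t))"
  have x: "x \<in> carrier_vec m" by (simp add: x_def)
  have "cols_mat m A (pick I) *\<^sub>v x = 0\<^sub>v m"
  proof (rule eq_vecI)
    fix k assume "k < dim_vec (0\<^sub>v m :: real vec)"
    hence k: "k < m" by simp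
    have "(cols_mat m A (pick I) *\<^sub>v x) $ k = (\<Sum>t<card I. (\<lambda>j. c j * A $$ (k, j)) (pick I t))"
      using cols_mat_mult_vec_nth[OF k x] cI by (simp add: x_def)
    also have "\<dots> = (\<Sum>j\<in>I. c j * A $$ (k, j))"
      by (rule sum.reindex_bij_betw[OF bij_betw_pick[OF fI]])
    also have "\<dots> = (\<Sum>j\<in>I. c j * col A j $ k)"
      using A IS k by (intro sum.cong) auto
    finally show "(cols_mat m A (pick I) *\<^sub>v x) $ k = 0\<^sub>v m $ k" using c k by simp
  qed (simp add: cols_mat_def)
  moreover have "det (cols_mat m A (pick I)) \<noteq> 0"
    using nz maxminor_eq_det_cols_mat_pick[OF A I] by simp
  ultimately have "x = 0\<^sub>v m"
    using x det_0_iff_vec_prod_zero_field[OF cols_mat_carrier, of m A "pick I"] by blast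
  moreover obtain t where "t < m" "pick I t = i"
    using bij_betw_pick[OF fI] i cI by (metis bij_betw_iff_bijections lessThan_iff)
  ultimately show "c i = 0" by (metis index_vec index_zero_vec(1) x_def)
qed

lemma extend_to_msubset:
  assumes "J \<subseteq> {0..<n}" "card J \<le> m" "m \<le> n"
  obtains I where "I \<in> msubsets n m" "J \<subseteq> I"
proof -
  have fJ: "finite J" using assms(1) finite_subset by blast
  have "m - card J \<le> card ({0..<n} - J)"
    using assms fJ by (simp add: card_Diff_subset)
  then obtain T where T: "T \<subseteq> {0..<n} - J" "card T = m - card J" "finite T"
    by (rule obtain_subset_with_card_n)
  have "card (J \<union> T) = m" using T fJ assms(2) by (subst card_Un_disjoint) auto
  hence "J \<union> T \<in> msubsets n m" using assms(1) T(1) by (auto simp: msubsets_def)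
  thus thesis by (rule that) simp
qed

lemma generic_arr_cols_if_tnz:
  assumes t: "tnz m n A" and mn: "m \<le> n"
  shows "generic_arr m n (col A)"
  unfolding generic_arr_def
proof (intro conjI allI impI)
  have A: "A \<in> carrier_mat m n" using t by (simp add: tnz_def)
  thus "dim_vec (col A j) = m" for j by simp
  fix J assume J: "J \<subseteq> {0..<n} \<and> card J \<le> m"
  then obtain I where I: "I \<in> msubsets n m" "J \<subseteq> I" using extend_to_msubset mn by blast
  have "finite I" using I(1) finite_subset by (auto simp: msubsets_def)
  moreover have "lin_indep_fam m (col A) I"
    using lin_indep_fam_cols_if_maxminor_nonzero[OF A I(1)] t I(1) by (simp add: tnz_def)
  ultimately show "lin_indep_fam m (col A) J" using lin_indep_fam_subset I(2) by blast
qed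

subsection \<open>The action of permutations\<close>

lemma col_perm_act:
  assumes "\<tau> permutes {0..<n}" "A \<in> carrier_mat m n" "i < n"
  shows "col (perm_act \<tau> A) (\<tau> i) = col A i"
proof -
  have "\<tau> i < n" using assms(1,3) permutes_in_image by fastforce
  thus ?thesis using assms by (intro eq_vecI) (auto simp: perm_act_def permutes_inverses(2))
qed

lemma perm_act_carrier: "A \<in> carrier_mat m n \<Longrightarrow> perm_act \<tau> A \<in> carrier_mat m n"
  by (simp add: perm_act_def)

lemma cols_mat_perm_act:
  assumes "A \<in> carrier_mat m n" "\<And>j. j < m \<Longrightarrow> g j < n"
  shows "cols_mat m (perm_act \<tau> A) g = cols_mat m A (Hilbert_Choice.inv \<tau> \<circ> g)"
  using assms by (intro eq_matI) (auto simp: cols_mat_def perm_act_def)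

lemma selection_inv_pick:
  assumes \<tau>: "\<tau> permutes {0..<n}" and I: "I \<in> msubsets n m"
  shows "inj_on (Hilbert_Choice.inv \<tau> \<circ> pick I) {..<m}"
    and "(Hilbert_Choice.inv \<tau> \<circ> pick I) ` {..<m} = Hilbert_Choice.inv \<tau> ` I"
    and "Hilbert_Choice.inv \<tau> ` I \<subseteq> {0..<n}"
    and "Hilbert_Choice.inv \<tau> ` I \<in> msubsets n m"
proof -
  have IS: "I \<subseteq> {0..<n}" and cI: "card I = m" using I by (auto simp: msubsets_def)
  have pick: "bij_betw (pick I) {..<m} I" using bij_betw_pick[of I] IS finite_subset cI by fastforce
  have inv: "Hilbert_Choice.inv \<tau> permutes {0..<n}" by (rule permutes_inv[OF \<tau>])
  show "inj_on (Hilbert_Choice.inv \<tau> \<circ> pick I) {..<m}"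
    using pick permutes_inj[OF inv] by (auto simp: bij_betw_def intro: comp_inj_on inj_on_subset)
  show "(Hilbert_Choice.inv \<tau> \<circ> pick I) ` {..<m} = Hilbert_Choice.inv \<tau> ` I"
    using pick by (metis bij_betw_imp_surj_on image_comp)
  show rng: "Hilbert_Choice.inv \<tau> ` I \<subseteq> {0..<n}"
    using IS permutes_image[OF inv] by blast
  show "Hilbert_Choice.inv \<tau> ` I \<in> msubsets n m"
    using rng cI card_image[OF inj_on_subset[OF permutes_inj[OF inv]]] by (simp add: msubsets_def)
qed

lemma maxminor_perm_act:
  assumes \<tau>: "\<tau> permutes {0..<n}" and I: "I \<in> msubsets n m" and A: "A \<in> carrier_mat m n"
  shows "maxminor (perm_act \<tau> A) I = det (cols_mat m A (Hilbert_Choice.inv \<tau> \<circ> pick I))"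
proof -
  have "pick I j < n" if "j < m" for j
    using I that pick_in_set[of j I] by (auto simp: msubsets_def)
  thus ?thesis using maxminor_eq_det_cols_mat_pick[OF _ I] A cols_mat_perm_act[OF A]
    by (simp add: perm_act_def)
qed

lemma tnz_perm_act:
  assumes \<tau>: "\<tau> permutes {0..<n}" and t: "tnz m n A"
  shows "tnz m n (perm_act \<tau> A)"
proof -
  have A: "A \<in> carrier_mat m n" using t by (simp add: tnz_def)
  have "maxminor (perm_act \<tau> A) I \<noteq> 0" if I: "I \<in> msubsets n m" for I
    using maxminor_perm_act[OF \<tau> I A] det_cols_mat_nonzero[OF t] selection_inv_pick[OF \<tau> I] by auto
  thus ?thesis using perm_act_carrier[OF A] by (simp add: tnz_def)
qed

lemma maxminor_perm_act_mult:
  assumes \<tau>: "\<tau> permutes {0..<n}" and I: "I \<in> msubsets n m"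
    and A: "A \<in> carrier_mat m n" and B: "B \<in> carrier_mat m n"
  shows "maxminor (perm_act \<tau> A) I * maxminor (perm_act \<tau> B) I =
         maxminor A (Hilbert_Choice.inv \<tau> ` I) * maxminor B (Hilbert_Choice.inv \<tau> ` I)"
proof -
  let ?g = "Hilbert_Choice.inv \<tau> \<circ> pick I"
  have g: "inj_on ?g {..<m}" "?g ` {..<m} \<subseteq> {0..<n}" using selection_inv_pick[OF \<tau> I] by auto
  show ?thesis
    using det_cols_mat_mult[OF g A B] selection_inv_pick(2)[OF \<tau> I] maxminor_perm_act[OF \<tau> I] A B
    by simp
qed

subsection \<open>Strata as sign classes\<close>

definition constant_sign_on :: "'a set \<Rightarrow> ('a \<Rightarrow> real) \<Rightarrow> bool" where
  "constant_sign_on S x \<longleftrightarrow> (\<exists>e. \<forall>I\<in>S. 0 < e * x I)"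

lemma constant_sign_on_trans:
  assumes "constant_sign_on S (\<lambda>I. x I * y I)" "constant_sign_on S (\<lambda>I. y I * z I)"
    and "\<forall>I\<in>S. y I \<noteq> 0"
  shows "constant_sign_on S (\<lambda>I. x I * z I)"
proof -
  obtain e f where e: "\<forall>I\<in>S. 0 < e * (x I * y I)" and f: "\<forall>I\<in>S. 0 < f * (y I * z I)"
    using assms(1,2) by (auto simp: constant_sign_on_def)
  have "0 < e * f * (x I * z I)" if I: "I \<in> S" for I
  proof (rule zero_less_mult_pos2)
    have "0 < (e * (x I * y I)) * (f * (y I * z I))" using e f I by simp
    thus "0 < e * f * (x I * z I) * (y I * y I)" by (simp add: ac_simps)
    show "0 < y I * y I" using assms(3) I not_real_square_gt_zero by blast
  qed
  thus ?thesis unfolding constant_sign_on_def by blast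
qed

lemma constant_sign_onI_products:
  assumes "\<And>I J. I \<in> S \<Longrightarrow> J \<in> S \<Longrightarrow> 0 < x I * x J"
  shows "constant_sign_on S x"
proof (cases "S = {}")
  case False
  then obtain J where "J \<in> S" by blast
  thus ?thesis using assms unfolding constant_sign_on_def by (metis mult.commute)
qed (simp add: constant_sign_on_def)

definition sign_pattern :: "nat set set \<Rightarrow> nat set \<Rightarrow> real" where
  "sign_pattern C I = (if I \<in> C then 1 else -1)"

lemma stratum_iff_constant_sign:
  "A \<in> stratum m n C \<longleftrightarrow>
     tnz m n A \<and> constant_sign_on (msubsets n m) (\<lambda>I. sign_pattern C I * maxminor A I)"
proof -
  let ?x = "\<lambda>I. sign_pattern C I * maxminor A I"
  have "(\<forall>I\<in>msubsets n m. (I \<in> C \<longrightarrow> maxminor A I > 0) \<and> (I \<notin> C \<longrightarrow> maxminor A I < 0))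
        \<longleftrightarrow> (\<forall>I\<in>msubsets n m. 0 < 1 * ?x I)"
   and "(\<forall>I\<in>msubsets n m. (I \<in> C \<longrightarrow> maxminor A I < 0) \<and> (I \<notin> C \<longrightarrow> maxminor A I > 0))
        \<longleftrightarrow> (\<forall>I\<in>msubsets n m. 0 < -1 * ?x I)"
    by (auto simp: sign_pattern_def)
  moreover have "constant_sign_on (msubsets n m) ?x \<longleftrightarrow>
      (\<forall>I\<in>msubsets n m. 0 < 1 * ?x I) \<or> (\<forall>I\<in>msubsets n m. 0 < -1 * ?x I)"
  proof
    assume "constant_sign_on (msubsets n m) ?x"
    then obtain e where e: "\<forall>I\<in>msubsets n m. 0 < e * ?x I" by (auto simp: constant_sign_on_def)
    show "(\<forall>I\<in>msubsets n m. 0 < 1 * ?x I) \<or> (\<forall>I\<in>msubsets n m. 0 < -1 * ?x I)"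
      using e by (cases "0 < e") (auto simp: zero_less_mult_iff)
  qed (unfold constant_sign_on_def, blast)
  ultimately show ?thesis by (auto simp: stratum_def)
qed

definition minor_sign_equiv :: "nat \<Rightarrow> nat \<Rightarrow> real mat \<Rightarrow> real mat \<Rightarrow> bool" where
  "minor_sign_equiv m n A B \<longleftrightarrow> constant_sign_on (msubsets n m) (\<lambda>I. maxminor A I * maxminor B I)"

lemma minor_sign_equiv_commute: "minor_sign_equiv m n A B \<longleftrightarrow> minor_sign_equiv m n B A"
  by (simp add: minor_sign_equiv_def mult.commute)

lemma sign_pattern_nonzero: "sign_pattern C I \<noteq> 0"
  by (simp add: sign_pattern_def)

lemma minor_sign_equiv_if_same_stratum:
  assumes "A \<in> stratum m n C" "B \<in> stratum m n C"
  shows "minor_sign_equiv m n A B"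
proof -
  have "constant_sign_on (msubsets n m) (\<lambda>I. maxminor A I * sign_pattern C I)"
    using assms(1) by (simp add: stratum_iff_constant_sign mult.commute)
  moreover have "constant_sign_on (msubsets n m) (\<lambda>I. sign_pattern C I * maxminor B I)"
    using assms(2) by (simp add: stratum_iff_constant_sign)
  ultimately show ?thesis
    unfolding minor_sign_equiv_def using sign_pattern_nonzero by (blast intro: constant_sign_on_trans)
qed

lemma stratum_if_minor_sign_equiv:
  assumes "tnz m n A" "B \<in> stratum m n D" "minor_sign_equiv m n B A"
  shows "A \<in> stratum m n D"
proof -
  have "constant_sign_on (msubsets n m) (\<lambda>I. sign_pattern D I * maxminor B I)"
    using assms(2) by (simp add: stratum_iff_constant_sign)
  moreover have "\<forall>I\<in>msubsets n m. maxminor B I \<noteq> 0"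
    using assms(2) by (simp add: stratum_def tnz_def)
  ultimately show ?thesis
    using assms(1,3) constant_sign_on_trans by (auto simp: stratum_iff_constant_sign minor_sign_equiv_def)
qed

lemma minor_sign_equiv_trans:
  assumes "minor_sign_equiv m n A B" "minor_sign_equiv m n B C" "tnz m n B"
  shows "minor_sign_equiv m n A C"
  using assms constant_sign_on_trans unfolding minor_sign_equiv_def tnz_def by blast

lemma minor_sign_equiv_perm_act:
  assumes \<tau>: "\<tau> permutes {0..<n}" and A: "A \<in> carrier_mat m n" and B: "B \<in> carrier_mat m n"
    and "minor_sign_equiv m n A B"
  shows "minor_sign_equiv m n (perm_act \<tau> A) (perm_act \<tau> B)"
proof -
  obtain e where "\<forall>I\<in>msubsets n m. 0 < e * (maxminor A I * maxminor B I)"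
    using assms(4) by (auto simp: minor_sign_equiv_def constant_sign_on_def)
  hence "\<forall>I\<in>msubsets n m. 0 < e * (maxminor (perm_act \<tau> A) I * maxminor (perm_act \<tau> B) I)"
    using maxminor_perm_act_mult[OF \<tau> _ A B] selection_inv_pick(4)[OF \<tau>] by simp
  thus ?thesis by (auto simp: minor_sign_equiv_def constant_sign_on_def)
qed

subsection \<open>Coefficient signs and exchanges\<close>

lemma lin_relation_cong:
  assumes "\<And>i. i \<le> m \<Longrightarrow> v i = w i"
  shows "(\<forall>k<m. v m $ k = (\<Sum>i<m. a i * v i $ k)) \<longleftrightarrow>
         (\<forall>k<m. w m $ k = (\<Sum>i<m. a i * w i $ k))"
proof -
  have "(\<Sum>i<m. a i * v i $ k) = (\<Sum>i<m. a i * w i $ k)" for k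
    using assms by (intro sum.cong) auto
  thus ?thesis using assms by simp
qed

text \<open>Any two m-subsets I, J are joined by card (I - J) exchanges.\<close>
lemma constant_sign_on_msubsets_if_exchange:
  fixes Q :: "nat set \<Rightarrow> real"
  assumes exch: "\<And>I p q. I \<in> msubsets n m \<Longrightarrow> p \<in> I \<Longrightarrow> q < n \<Longrightarrow> q \<notin> I \<Longrightarrow>
        0 < Q I * Q (insert q (I - {p}))"
    and nz: "\<And>I. I \<in> msubsets n m \<Longrightarrow> Q I \<noteq> 0"
  shows "constant_sign_on (msubsets n m) Q"
proof (rule constant_sign_onI_products)
  have "0 < Q I * Q J" if "I \<in> msubsets n m" "J \<in> msubsets n m" "card (I - J) = d" for d I J
    using that
  proof (induction d arbitrary: I)
    case 0
    have fin: "finite I" "finite J" using 0 finite_subset by (auto simp: msubsets_def)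
    hence "I \<subseteq> J" using 0 by auto
    moreover have "card I = card J" using "0.prems" by (simp add: msubsets_def)
    ultimately have "I = J" using fin card_subset_eq by blast
    thus ?case using nz[OF 0(1)] not_real_square_gt_zero by blast
  next
    case (Suc d)
    have IS: "I \<subseteq> {0..<n}" "card I = m" and JS: "J \<subseteq> {0..<n}" "card J = m"
      using Suc.prems by (auto simp: msubsets_def)
    have fin: "finite I" "finite J" using IS(1) JS(1) finite_subset by auto
    obtain p where p: "p \<in> I - J" using Suc.prems(3) by (metis card.empty ex_in_conv nat.distinct(1))
    have "card (J - I) = card (I - J)"
      using fin IS(2) JS(2) by (simp add: card_Diff_subset_Int Int_commute)
    then obtain q where q: "q \<in> J - I" using Suc.prems(3) by (metis card.empty ex_in_conv nat.distinct(1))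
    define I' where "I' = insert q (I - {p})"
    have "card I' = m" using fin p q IS(2) card_gt_0_iff[of I] by (auto simp: I'_def card_insert_if)
    hence I': "I' \<in> msubsets n m" using IS JS q by (auto simp: I'_def msubsets_def)
    have "I' - J = (I - J) - {p}" using p q by (auto simp: I'_def)
    hence "card (I' - J) = d" using Suc.prems(3) p fin by simp
    hence "0 < Q I' * Q J" using Suc.IH I' Suc.prems(2) by blast
    moreover have "0 < Q I * Q I'" unfolding I'_def using exch Suc.prems(1) p q JS(1) by auto
    ultimately show ?case by (auto simp: zero_less_mult_iff)
  qed
  thus "\<And>I J. I \<in> msubsets n m \<Longrightarrow> J \<in> msubsets n m \<Longrightarrow> 0 < Q I * Q J" by blast
qed

definition arr_iso_map ::
    "nat \<Rightarrow> nat \<Rightarrow> (nat \<Rightarrow> real vec) \<Rightarrow> (nat \<Rightarrow> real vec) \<Rightarrow> (nat \<Rightarrow> nat) \<Rightarrow> bool" where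
  "arr_iso_map m n v w \<sigma> \<longleftrightarrow> (\<forall>f. inj_on f {..m} \<and> f ` {..m} \<subseteq> {0..<n} \<longrightarrow>
       (\<forall>a b. (\<forall>k<m. v (f m) $ k = (\<Sum>j<m. a j * v (f j) $ k)) \<and>
              (\<forall>k<m. w (\<sigma> (f m)) $ k = (\<Sum>j<m. b j * w (\<sigma> (f j)) $ k))
              \<longrightarrow> (\<forall>j<m. a j * b j > 0)))"

lemma iso_arr_iff_arr_iso_map:
  "iso_arr m n v w \<longleftrightarrow> (\<exists>\<sigma>. bij_betw \<sigma> {0..<n} {0..<n} \<and> arr_iso_map m n v w \<sigma>)"
  by (simp add: iso_arr_def arr_iso_map_def)

lemma arr_iso_map_cong:
  assumes "\<And>i. i < n \<Longrightarrow> \<sigma> i = \<tau> i" "arr_iso_map m n v w \<sigma>"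
  shows "arr_iso_map m n v w \<tau>"
  unfolding arr_iso_map_def
proof (intro allI impI)
  fix f a b j assume f: "inj_on f {..m} \<and> f ` {..m} \<subseteq> {0..<n}"
    and rel: "(\<forall>k<m. v (f m) $ k = (\<Sum>j<m. a j * v (f j) $ k)) \<and>
              (\<forall>k<m. w (\<tau> (f m)) $ k = (\<Sum>j<m. b j * w (\<tau> (f j)) $ k))"
    and j: "j < m"
  have "\<And>i. i \<le> m \<Longrightarrow> w (\<sigma> (f i)) = w (\<tau> (f i))" using assms(1) f by auto
  hence "\<forall>k<m. w (\<sigma> (f m)) $ k = (\<Sum>j<m. b j * w (\<sigma> (f j)) $ k)"
    using rel lin_relation_cong[of m "\<lambda>i. w (\<sigma> (f i))" "\<lambda>i. w (\<tau> (f i))" b] by blast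
  thus "a j * b j > 0"
    using assms(2)[unfolded arr_iso_map_def, rule_format, OF f] rel j by blast
qed

lemma arr_iso_map_if_minor_sign_equiv:
  assumes \<sigma>: "\<sigma> permutes {0..<n}" and A: "A \<in> carrier_mat m n" and B: "B \<in> carrier_mat m n"
    and equiv: "minor_sign_equiv m n (perm_act \<sigma> A) B"
  shows "arr_iso_map m n (col A) (col B) \<sigma>"
  unfolding arr_iso_map_def
proof (intro allI impI)
  fix f a b j
  assume f: "inj_on f {..m} \<and> f ` {..m} \<subseteq> {0..<n}"
    and rel: "(\<forall>k<m. col A (f m) $ k = (\<Sum>j<m. a j * col A (f j) $ k)) \<and>
              (\<forall>k<m. col B (\<sigma> (f m)) $ k = (\<Sum>j<m. b j * col B (\<sigma> (f j)) $ k))"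
    and j: "j < m"
  let ?A' = "perm_act \<sigma> A" and ?g = "\<sigma> \<circ> f"
  let ?Q = "\<lambda>I. maxminor ?A' I * maxminor B I"
  obtain e where e: "\<forall>I\<in>msubsets n m. 0 < e * ?Q I"
    using equiv by (auto simp: minor_sign_equiv_def constant_sign_on_def)
  have g: "inj_on ?g {..m}" "?g ` {..m} \<subseteq> {0..<n}"
    using comp_inj_on[OF conjunct1[OF f] permutes_inj_on[OF \<sigma>]] f permutes_in_image[OF \<sigma>] by auto
  have "\<And>i. i \<le> m \<Longrightarrow> col A (f i) = col ?A' (?g i)" using col_perm_act[OF \<sigma> A] f by auto
  hence a: "\<forall>k<m. col ?A' (?g m) $ k = (\<Sum>i<m. a i * col ?A' (?g i) $ k)"
    using rel lin_relation_cong[of m "\<lambda>i. col A (f i)" "\<lambda>i. col ?A' (?g i)" a] by blast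
  have b: "\<forall>k<m. col B (?g m) $ k = (\<Sum>i<m. b i * col B (?g i) $ k)" using rel by simp
  have "?g ` {..<m} \<in> msubsets n m"
    using g(2) by (intro image_lessThan_in_msubsets inj_on_subset[OF g(1)]) auto
  moreover have "(?g(j := ?g m)) ` {..<m} \<in> msubsets n m"
    using g(2) by (intro image_lessThan_in_msubsets inj_on_fun_upd_last[OF g(1) j]) auto
  ultimately have "0 < e * ?Q (?g ` {..<m})" "0 < e * ?Q ((?g(j := ?g m)) ` {..<m})" using e by auto
  moreover have "?Q ((?g(j := ?g m)) ` {..<m}) = a j * b j * ?Q (?g ` {..<m})"
    by (rule minor_products_exchange[OF perm_act_carrier[OF A] B g j a b])
  ultimately show "a j * b j > 0" by (metis mult.left_commute zero_less_mult_pos2)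
qed

lemma exchange_selection:
  assumes m: "1 \<le> m" and I: "I \<in> msubsets n m" and p: "p \<in> I" and q: "q < n" "q \<notin> I"
  obtains g where "inj_on g {..m}" "g ` {..m} \<subseteq> {0..<n}" "g ` {..<m} = I"
    "(g(0 := g m)) ` {..<m} = insert q (I - {p})"
proof -
  have IS: "I \<subseteq> {0..<n}" "card I = m" using I by (auto simp: msubsets_def)
  have "finite I" using IS(1) finite_subset by blast
  then obtain h where h: "bij_betw h {..<m} I" "h 0 = p"
    using finite_bij_betw_lessThan_from[OF _ p] IS(2) by metis
  define g where "g = h(m := q)"
  have g_img: "g ` {..<m} = I" using h(1) by (simp add: g_def bij_betw_def)
  have g_inj: "inj_on g {..m}"
  proof -
    have "inj_on g {..<m}" using h(1) by (simp add: g_def bij_betw_def inj_on_def)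
    moreover have "g m \<notin> g ` {..<m}" using g_img q by (simp add: g_def)
    ultimately show ?thesis by (simp add: lessThan_Suc_atMost[symmetric] lessThan_Suc)
  qed
  have g_rng: "g ` {..m} \<subseteq> {0..<n}"
    using g_img IS q by (auto simp: lessThan_Suc_atMost[symmetric] g_def)
  have g_exch: "(g(0 := g m)) ` {..<m} = insert q (I - {p})"
  proof -
    have "(g(0 := g m)) ` {..<m} = insert q (h ` ({..<m} - {0}))" using m by (auto simp: g_def)
    also have "h ` ({..<m} - {0}) = I - {p}"
      using h m inj_on_image_set_diff[of h "{..<m}" "{..<m}" "{0}"] by (auto simp: bij_betw_def)
    finally show ?thesis .
  qed
  show thesis by (rule that[OF g_inj g_rng g_img g_exch])
qed

lemma exchange_minor_products_pos:
  assumes m: "1 \<le> m" and \<tau>: "\<tau> permutes {0..<n}" and tA: "tnz m n A" and tB: "tnz m n B"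
    and iso: "arr_iso_map m n (col A) (col B) \<tau>"
    and I: "I \<in> msubsets n m" and p: "p \<in> I" and q: "q < n" "q \<notin> I"
  shows "0 < (maxminor (perm_act \<tau> A) I * maxminor B I) *
             (maxminor (perm_act \<tau> A) (insert q (I - {p})) * maxminor B (insert q (I - {p})))"
proof -
  let ?A' = "perm_act \<tau> A" and ?J = "insert q (I - {p})"
  let ?Q = "\<lambda>I. maxminor ?A' I * maxminor B I"
  have A: "A \<in> carrier_mat m n" and B: "B \<in> carrier_mat m n" using tA tB by (auto simp: tnz_def)
  have tA': "tnz m n ?A'" by (rule tnz_perm_act[OF \<tau> tA])
  obtain g where g_inj: "inj_on g {..m}" and g_rng: "g ` {..m} \<subseteq> {0..<n}"
    and g_img: "g ` {..<m} = I" and g_exch: "(g(0 := g m)) ` {..<m} = ?J"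
    using exchange_selection[OF m I p q] .
  obtain a where a: "\<forall>k<m. col ?A' (g m) $ k = (\<Sum>i<m. a i * col ?A' (g i) $ k)"
    by (rule col_coefficients_exist[OF tA' inj_on_subset[OF g_inj] g_rng]) auto
  obtain b where b: "\<forall>k<m. col B (g m) $ k = (\<Sum>i<m. b i * col B (g i) $ k)"
    by (rule col_coefficients_exist[OF tB inj_on_subset[OF g_inj] g_rng]) auto
  \<comment> \<open>the columns g i of perm_act tau A are the columns f i of A\<close>
  define f where "f = Hilbert_Choice.inv \<tau> \<circ> g"
  have \<tau>f: "\<tau> (f i) = g i" for i by (simp add: f_def permutes_inverses(1)[OF \<tau>])
  have f: "inj_on f {..m}" "f ` {..m} \<subseteq> {0..<n}"
    using comp_inj_on[OF g_inj permutes_inj_on[OF permutes_inv[OF \<tau>]]] g_rng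
      permutes_in_image[OF permutes_inv[OF \<tau>]] by (auto simp: f_def)
  have "col ?A' (g i) = col A (f i)" if "i \<le> m" for i
  proof -
    have "f i < n" using f(2) that by auto
    thus ?thesis using col_perm_act[OF \<tau> A, of "f i"] \<tau>f[of i] by simp
  qed
  hence "\<forall>k<m. col A (f m) $ k = (\<Sum>i<m. a i * col A (f i) $ k)"
    using a lin_relation_cong[of m "\<lambda>i. col ?A' (g i)" "\<lambda>i. col A (f i)" a] by blast
  moreover have "\<forall>k<m. col B (\<tau> (f m)) $ k = (\<Sum>i<m. b i * col B (\<tau> (f i)) $ k)"
    using b by (simp add: \<tau>f)
  ultimately have ab: "0 < a 0 * b 0"
    using iso[unfolded arr_iso_map_def, rule_format, OF conjI[OF f] conjI] m by simp
  have "?Q ?J = a 0 * b 0 * ?Q I"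
    using minor_products_exchange[OF perm_act_carrier[OF A] B g_inj g_rng _ a b, of 0] m
    unfolding g_img g_exch by simp
  hence eq: "?Q I * ?Q ?J = a 0 * b 0 * (?Q I * ?Q I)" by (simp only: ac_simps)
  have "?Q I \<noteq> 0" using tA' tB I by (simp add: tnz_def)
  hence "0 < ?Q I * ?Q I" using not_real_square_gt_zero by blast
  thus ?thesis unfolding eq using ab by (rule mult_pos_pos[rotated])
qed

lemma minor_sign_equiv_if_arr_iso_map:
  assumes "1 \<le> m" "\<tau> permutes {0..<n}" "tnz m n A" "tnz m n B" "arr_iso_map m n (col A) (col B) \<tau>"
  shows "minor_sign_equiv m n (perm_act \<tau> A) B"
  unfolding minor_sign_equiv_def
proof (rule constant_sign_on_msubsets_if_exchange)
  show "\<And>I p q. I \<in> msubsets n m \<Longrightarrow> p \<in> I \<Longrightarrow> q < n \<Longrightarrow> q \<notin> I \<Longrightarrow>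
    0 < maxminor (perm_act \<tau> A) I * maxminor B I *
        (maxminor (perm_act \<tau> A) (insert q (I - {p})) * maxminor B (insert q (I - {p})))"
    by (rule exchange_minor_products_pos[OF assms])
  show "\<And>I. I \<in> msubsets n m \<Longrightarrow> maxminor (perm_act \<tau> A) I * maxminor B I \<noteq> 0"
    using tnz_perm_act[OF assms(2,3)] assms(4) by (simp add: tnz_def)
qed

lemma iso_generic_arr_if_same_orbit:
  assumes "m \<le> n" "same_orbit m n C D" "A \<in> stratum m n C" "B \<in> stratum m n D"
  shows "iso_generic_arr m n (col A) (col B)"
proof -
  obtain \<sigma> where \<sigma>: "\<sigma> permutes {0..<n}" "perm_act \<sigma> A \<in> stratum m n D"
    using assms(2,3) unfolding same_orbit_def by blast
  have tA: "tnz m n A" and tB: "tnz m n B" using assms(3,4) by (auto simp: stratum_def)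
  hence "arr_iso_map m n (col A) (col B) \<sigma>"
    using arr_iso_map_if_minor_sign_equiv[OF \<sigma>(1)] minor_sign_equiv_if_same_stratum[OF \<sigma>(2) assms(4)]
    by (simp add: tnz_def)
  hence "iso_arr m n (col A) (col B)"
    using permutes_imp_bij[OF \<sigma>(1)] iso_arr_iff_arr_iso_map by blast
  thus ?thesis using generic_arr_cols_if_tnz[OF _ assms(1)] tA tB by (simp add: iso_generic_arr_def)
qed

lemma same_orbit_if_iso_arr:
  assumes m: "1 \<le> m" and A0: "A0 \<in> stratum m n C" and B0: "B0 \<in> stratum m n D"
    and iso: "iso_arr m n (col A0) (col B0)"
  shows "same_orbit m n C D"
proof -
  obtain \<sigma> where \<sigma>: "bij_betw \<sigma> {0..<n} {0..<n}" "arr_iso_map m n (col A0) (col B0) \<sigma>"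
    using iso iso_arr_iff_arr_iso_map by blast
  define \<tau> where "\<tau> i = (if i < n then \<sigma> i else i)" for i
  have "bij_betw \<tau> {0..<n} {0..<n}"
    using \<sigma>(1) by (rule bij_betw_cong[THEN iffD1, rotated]) (simp add: \<tau>_def)
  hence \<tau>: "\<tau> permutes {0..<n}" by (rule bij_imp_permutes) (simp add: \<tau>_def)
  have tA0: "tnz m n A0" and tB0: "tnz m n B0" using A0 B0 by (auto simp: stratum_def)
  have "arr_iso_map m n (col A0) (col B0) \<tau>" by (rule arr_iso_map_cong[OF _ \<sigma>(2)]) (simp add: \<tau>_def)
  hence equiv0: "minor_sign_equiv m n (perm_act \<tau> A0) B0"
    by (rule minor_sign_equiv_if_arr_iso_map[OF m \<tau> tA0 tB0])
  have "perm_act \<tau> A \<in> stratum m n D" if A: "A \<in> stratum m n C" for A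
  proof -
    have tA: "tnz m n A" using A by (simp add: stratum_def)
    have "minor_sign_equiv m n (perm_act \<tau> A) (perm_act \<tau> A0)"
      using minor_sign_equiv_perm_act[OF \<tau>] minor_sign_equiv_if_same_stratum[OF A A0] tA tA0
      by (simp add: tnz_def)
    hence "minor_sign_equiv m n (perm_act \<tau> A) B0"
      using minor_sign_equiv_trans equiv0 tnz_perm_act[OF \<tau> tA0] by blast
    thus ?thesis
      using stratum_if_minor_sign_equiv[OF tnz_perm_act[OF \<tau> tA] B0] minor_sign_equiv_commute by blast
  qed
  thus ?thesis using \<tau> unfolding same_orbit_def by blast
qed

theorem mainTheorem1:
  fixes m n :: nat and C D :: "nat set set"
  assumes "1 \<le> m" and "m \<le> n"
    and "C \<subseteq> msubsets n m" and "D \<subseteq> msubsets n m"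
    and "stratum m n C \<noteq> {}" and "stratum m n D \<noteq> {}"
  shows "same_orbit m n C D \<longleftrightarrow>
    (\<forall>A B. A \<in> stratum m n C \<and> B \<in> stratum m n D \<longrightarrow>
       iso_generic_arr m n (col A) (col B))"
proof
  assume "same_orbit m n C D"
  thus "\<forall>A B. A \<in> stratum m n C \<and> B \<in> stratum m n D \<longrightarrow> iso_generic_arr m n (col A) (col B)"
    using iso_generic_arr_if_same_orbit[OF assms(2)] by blast
next
  assume iso: "\<forall>A B. A \<in> stratum m n C \<and> B \<in> stratum m n D \<longrightarrow> iso_generic_arr m n (col A) (col B)"
  obtain A0 B0 where "A0 \<in> stratum m n C" "B0 \<in> stratum m n D" using assms(5,6) by blast
  thus "same_orbit m n C D"
    using same_orbit_if_iso_arr[OF assms(1)] iso by (simp add: iso_generic_arr_def)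
qed

end
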